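(* Assume the Objectivity Assumption (for every paper $a$, all reviewers give $a$ the same score vector). Let $p,q \in (1,\infty)$. Then the $L(p,q)$-aggregation method satisfies Consensus. If moreover $p=q$ (so $p=q>1$), the $L(p,q)$-aggregation method satisfies Consistency.
   Context: Peer-review setting: a finite set $\mathcal{R}$ of $n$ reviewers, a finite set $\mathcal{P}$ of $m$ papers, and $d\ge 1$ evaluation criteria. Every reviewer $i$ reviews every paper $a$, giving a score vector $\bar{x}_{ia}\in[0,10]^d$ and a recommendation $y_{ia}\in[0,10]$. A function $h:[0,10]^d\to[0,10]$ is monotonic if $\bar x\le \bar y$ componentwise implies $h(\bar x)\le h(\bar y)$. Each reviewer $i$ has a monotonic $h_i$ with $y_{ia}=h_i(\bar x_{ia})$ for all $a$. The $L(p,q)$-aggregation method ($p,q\in[1,\infty)$): (1) ERM step: find a monotonic $\hat h:[0,10]^d\to[0,10]$ minimizing $\big[\sum_{i\in\mathcal{R}}\big(\sum_{a\in\mathcal{P}}|y_{ia}-h(\bar x_{ia})|^p\big)^{q/p}\big]^{1/q}$ over all monotonic $h$ (only the finitely many values $h(\bar x_{ia})$ matter); among minimizers, the one whose value vector $(\hat h(\bar x_{ia}))_{i,a}$ has smallest Euclidean norm is chosen. Put $\hat y_{ia}=\hat h(\bar x_{ia})$. (2) Aggregation step: the solution $(s_a)_{a\in\mathcal{P}}$ minimizes $\big[\sum_{i\in\mathcal{R}}\big(\sum_{a\in\mathcal{P}}|\hat y_{ia}-s_a|^p\big)^{q/p}\big]^{1/q}$ (ties broken by smallest Euclidean norm).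 Objectivity Assumption: $\bar x_{ia}=\bar x_{ja}$ for all $i,j\in\mathcal R$ and all $a\in\mathcal P$. Axioms (a method satisfies an axiom if the stated property holds for every admissible data set): Consensus: if for a paper $a$ we have $y_{ia}=y$ for all $i\in\mathcal R$, then $s_a=y$. Paper $a$ dominates paper $b$ if there is a permutation $\pi$ of $\mathcal R$ with $y_{ia}\ge y_{\pi(i)b}$ for all $i$; the domination is strict if at least one of these inequalities is strict. Efficiency: whenever $a$ dominates $b$, $s_a\ge s_b$. Consistency: Efficiency holds and, whenever $a$ strictly dominates $b$, $s_a>s_b$. *)

theory Defs
  imports Complex_Main
begin

(* Reviewers: finite type 'r; papers: finite type 'p; criteria: finite type 'c (d = CARD('c) >= 1).
   Score vectors are functions 'c => real; the order on them is the componentwise order (le_fun). *)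

definition in_box :: "('c \<Rightarrow> real) \<Rightarrow> bool" where
  "in_box v \<longleftrightarrow> (\<forall>c. 0 \<le> v c \<and> v c \<le> 10)"

definition monotonic :: "(('c \<Rightarrow> real) \<Rightarrow> real) \<Rightarrow> bool" where
  "monotonic h \<longleftrightarrow> (\<forall>v. in_box v \<longrightarrow> 0 \<le> h v \<and> h v \<le> 10) \<and>
                   (\<forall>v w. in_box v \<longrightarrow> in_box w \<longrightarrow> v \<le> w \<longrightarrow> h v \<le> h w)"

definition admissible ::
  "('r::finite \<Rightarrow> 'p::finite \<Rightarrow> 'c::finite \<Rightarrow> real) \<Rightarrow> ('r \<Rightarrow> 'p \<Rightarrow> real) \<Rightarrow> bool" where
  "admissible x y \<longleftrightarrow> (\<forall>i a. in_box (x i a) \<and> 0 \<le> y i a \<and> y i a \<le> 10) \<and>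
                       (\<forall>i. \<exists>h. monotonic h \<and> (\<forall>a. y i a = h (x i a)))"

definition objectivity :: "('r \<Rightarrow> 'p \<Rightarrow> 'c \<Rightarrow> real) \<Rightarrow> bool" where
  "objectivity x \<longleftrightarrow> (\<forall>i j a. x i a = x j a)"

definition Lpq :: "real \<Rightarrow> real \<Rightarrow> ('r::finite \<Rightarrow> 'p::finite \<Rightarrow> real) \<Rightarrow> ('r \<Rightarrow> 'p \<Rightarrow> real) \<Rightarrow> real" where
  "Lpq p q u v = (\<Sum>i\<in>UNIV. (\<Sum>a\<in>UNIV. \<bar>u i a - v i a\<bar> powr p) powr (q / p)) powr (1 / q)"

definition feasible_values ::
  "('r \<Rightarrow> 'p \<Rightarrow> 'c \<Rightarrow> real) \<Rightarrow> ('r \<Rightarrow> 'p \<Rightarrow> real) set" where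
  "feasible_values x = {v. \<exists>h. monotonic h \<and> (\<forall>i a. v i a = h (x i a))}"

definition erm_output :: "real \<Rightarrow> real \<Rightarrow> ('r::finite \<Rightarrow> 'p::finite \<Rightarrow> 'c \<Rightarrow> real) \<Rightarrow>
    ('r \<Rightarrow> 'p \<Rightarrow> real) \<Rightarrow> ('r \<Rightarrow> 'p \<Rightarrow> real) \<Rightarrow> bool" where
  "erm_output p q x y yhat \<longleftrightarrow>
     yhat \<in> feasible_values x \<and>
     (\<forall>w\<in>feasible_values x. Lpq p q y yhat \<le> Lpq p q y w) \<and>
     (\<forall>w\<in>feasible_values x. Lpq p q y w = Lpq p q y yhat \<longrightarrow>
        (\<Sum>i\<in>UNIV. \<Sum>a\<in>UNIV. (yhat i a)\<^sup>2) \<le> (\<Sum>i\<in>UNIV. \<Sum>a\<in>UNIV. (w i a)\<^sup>2))"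

definition agg_output :: "real \<Rightarrow> real \<Rightarrow> ('r::finite \<Rightarrow> 'p::finite \<Rightarrow> real) \<Rightarrow> ('p \<Rightarrow> real) \<Rightarrow> bool" where
  "agg_output p q yhat s \<longleftrightarrow>
     (\<forall>t. Lpq p q yhat (\<lambda>i a. s a) \<le> Lpq p q yhat (\<lambda>i a. t a)) \<and>
     (\<forall>t. Lpq p q yhat (\<lambda>i a. t a) = Lpq p q yhat (\<lambda>i a. s a) \<longrightarrow>
        (\<Sum>a\<in>UNIV. (s a)\<^sup>2) \<le> (\<Sum>a\<in>UNIV. (t a)\<^sup>2))"

definition Lpq_method :: "real \<Rightarrow> real \<Rightarrow> ('r::finite \<Rightarrow> 'p::finite \<Rightarrow> 'c \<Rightarrow> real) \<Rightarrow>
    ('r \<Rightarrow> 'p \<Rightarrow> real) \<Rightarrow> ('p \<Rightarrow> real) \<Rightarrow> bool" where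
  "Lpq_method p q x y s \<longleftrightarrow> (\<exists>yhat. erm_output p q x y yhat \<and> agg_output p q yhat s)"

definition dominates :: "('r \<Rightarrow> 'p \<Rightarrow> real) \<Rightarrow> 'p \<Rightarrow> 'p \<Rightarrow> bool" where
  "dominates y a b \<longleftrightarrow> (\<exists>\<pi>. bij \<pi> \<and> (\<forall>i. y i a \<ge> y (\<pi> i) b))"

definition strictly_dominates :: "('r \<Rightarrow> 'p \<Rightarrow> real) \<Rightarrow> 'p \<Rightarrow> 'p \<Rightarrow> bool" where
  "strictly_dominates y a b \<longleftrightarrow>
     (\<exists>\<pi>. bij \<pi> \<and> (\<forall>i. y i a \<ge> y (\<pi> i) b) \<and> (\<exists>i. y i a > y (\<pi> i) b))"

definition consensus :: "('r \<Rightarrow> 'p \<Rightarrow> real) \<Rightarrow> ('p \<Rightarrow> real) \<Rightarrow> bool" where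
  "consensus y s \<longleftrightarrow> (\<forall>a c. (\<forall>i. y i a = c) \<longrightarrow> s a = c)"

definition efficiency :: "('r \<Rightarrow> 'p \<Rightarrow> real) \<Rightarrow> ('p \<Rightarrow> real) \<Rightarrow> bool" where
  "efficiency y s \<longleftrightarrow> (\<forall>a b. dominates y a b \<longrightarrow> s a \<ge> s b)"

definition consistency :: "('r \<Rightarrow> 'p \<Rightarrow> real) \<Rightarrow> ('p \<Rightarrow> real) \<Rightarrow> bool" where
  "consistency y s \<longleftrightarrow> efficiency y s \<and> (\<forall>a b. strictly_dominates y a b \<longrightarrow> s a > s b)"

end

theory Submission
  imports Defs
begin

text \<open>Under objectivity a monotone value vector cannot distinguish reviewers, so the aggregation
step returns the ERM values themselves.

Consensus: if every reviewer gives paper \<open>a\<close> the value \<open>c\<close>, forcing the ERM function to take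
the value \<open>c\<close> at \<open>x a\<close> (raising it to at least \<open>c\<close> above \<open>x a\<close>, lowering it to at most \<open>c\<close>
below) keeps it monotone and moves every value towards the reviewers' own monotone scores,
strictly so at \<open>a\<close> unless the value there was already \<open>c\<close>.

Consistency for \<open>p = q\<close>: the loss separates over papers. A minimiser \<open>t\<close> of
\<open>\<Sum>\<^sub>i \<bar>Y\<^sub>i - t\<bar>\<^sup>p\<close> is a root of the strictly decreasing function
\<open>t \<mapsto> \<Sum>\<^sub>i sgn (Y\<^sub>i - t) \<bar>Y\<^sub>i - t\<bar>\<^sup>p\<^sup>-\<^sup>1\<close>, hence monotone in \<open>Y\<close>, strictly
so when \<open>Y\<close> increases strictly somewhere, and invariant under permutations of the reviewers.
Monotonicity makes the paper-wise minimisers a feasible ERM candidate, so ERM attains them on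
every paper, and the other two properties give consistency.\<close>

definition signed_powr :: "real \<Rightarrow> real \<Rightarrow> real" where
  "signed_powr u r = sgn u * \<bar>u\<bar> powr r"

lemma has_real_derivative_abs_powr:
  assumes p: "1 < p"
  shows "((\<lambda>u. \<bar>u\<bar> powr p) has_real_derivative p * signed_powr u (p - 1)) (at u)"
proof -
  consider "u = 0" | "0 < u" | "u < 0" by linarith
  then show ?thesis
  proof cases
    case 1
    have bound: "\<bar>\<bar>h\<bar> powr p / h\<bar> \<le> \<bar>h\<bar> powr (p - 1)" for h :: real
    proof (cases "h = 0")
      case False
      then have "\<bar>h\<bar> powr p = \<bar>h\<bar> * \<bar>h\<bar> powr (p - 1)"
        by (metis abs_ge_zero add.commute diff_add_cancel powr_add powr_one)
      then show ?thesis using False by (simp add: abs_mult)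
    qed simp
    have "((\<lambda>h. \<bar>h\<bar> powr (p - 1)) \<longlongrightarrow> 0) (at (0::real))"
      using p by (intro tendsto_zero_powrI tendsto_intros) (auto intro: tendsto_eq_intros)
    moreover have "\<forall>\<^sub>F h in at 0. norm ((\<bar>0 + h\<bar> powr p - \<bar>0\<bar> powr p) / h) \<le> norm (\<bar>h\<bar> powr (p - 1)) * 1"
      using bound by (auto intro!: always_eventually)
    ultimately have "((\<lambda>h. (\<bar>0 + h\<bar> powr p - \<bar>0\<bar> powr p) / h) \<longlongrightarrow> 0) (at 0)"
      by (rule tendsto_0_le)
    then show ?thesis using 1 p by (simp add: has_field_derivative_iff signed_powr_def)
  next
    case 2
    have "eventually (\<lambda>v. \<bar>v\<bar> powr p = v powr p) (nhds u)"
      using eventually_nhds_in_open[of "{0<..}" u] 2 by (auto elim!: eventually_mono)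
    then show ?thesis
      using has_real_derivative_powr[OF 2, of p] 2
      by (subst DERIV_cong_ev[OF refl]) (auto simp: signed_powr_def)
  next
    case 3
    have "eventually (\<lambda>v. \<bar>v\<bar> powr p = (- v) powr p) (nhds u)"
      using eventually_nhds_in_open[of "{..<0}" u] 3 by (auto elim!: eventually_mono)
    moreover have "((\<lambda>v. (- v) powr p) has_real_derivative p * (- u) powr (p - 1) * (- 1)) (at u)"
      using 3 by (auto intro!: derivative_eq_intros)
    ultimately show ?thesis
      using 3 by (subst DERIV_cong_ev[OF refl]) (auto simp: signed_powr_def)
  qed
qed

lemma strict_mono_signed_powr:
  assumes r: "0 < r"
  shows "strict_mono (\<lambda>u. signed_powr u r)"
proof (rule strict_monoI)
  fix u v :: real
  assume "u < v"
  consider "0 \<le> u" | "v \<le> 0" | "u < 0" "0 < v" by linarith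
  then show "signed_powr u r < signed_powr v r"
  proof cases
    case 1
    then show ?thesis
      using \<open>u < v\<close> r powr_less_mono2[of r u v] by (cases "u = 0") (simp_all add: signed_powr_def)
  next
    case 2
    then show ?thesis
      using \<open>u < v\<close> r powr_less_mono2[of r "- v" "- u"] by (cases "v = 0") (simp_all add: signed_powr_def)
  next
    case 3
    then have "signed_powr u r = - ((- u) powr r)" "signed_powr v r = v powr r"
      by (simp_all add: signed_powr_def)
    moreover have "0 < (- u) powr r" "0 < v powr r" using 3 by simp_all
    ultimately show ?thesis by linarith
  qed
qed

lemma zero_sum_shift_mono:
  fixes f :: "real \<Rightarrow> real" and Y Y' :: "'i::finite \<Rightarrow> real"
  assumes f: "strict_mono f"
    and root: "(\<Sum>i\<in>UNIV. f (Y i - t)) = 0" and root': "(\<Sum>i\<in>UNIV. f (Y' i - t')) = 0"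
    and le: "Y \<le> Y'"
  shows "t \<le> t'"
proof (rule ccontr)
  assume "\<not> t \<le> t'"
  then have "Y i - t < Y' i - t'" for i
    using le_funD[OF le, of i] by linarith
  then have "(\<Sum>i\<in>UNIV. f (Y i - t)) < (\<Sum>i\<in>UNIV. f (Y' i - t'))"
    using f by (intro sum_strict_mono) (auto simp: strict_mono_less)
  then show False using root root' by simp
qed

lemma zero_sum_shift_strict_mono:
  fixes f :: "real \<Rightarrow> real" and Y Y' :: "'i::finite \<Rightarrow> real"
  assumes f: "strict_mono f"
    and root: "(\<Sum>i\<in>UNIV. f (Y i - t)) = 0" and root': "(\<Sum>i\<in>UNIV. f (Y' i - t')) = 0"
    and le: "Y \<le> Y'" and less: "Y k < Y' k"
  shows "t < t'"
proof (rule ccontr)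
  assume "\<not> t < t'"
  then have "Y i - t \<le> Y' i - t'" for i
    using le_funD[OF le, of i] by linarith
  moreover have "Y k - t < Y' k - t'"
    using less \<open>\<not> t < t'\<close> by linarith
  ultimately have "(\<Sum>i\<in>UNIV. f (Y i - t)) < (\<Sum>i\<in>UNIV. f (Y' i - t'))"
    using f by (intro sum_strict_mono_ex1) (auto simp: strict_mono_less strict_mono_less_eq)
  then show False using root root' by simp
qed

definition lp_cost :: "real \<Rightarrow> ('i::finite \<Rightarrow> real) \<Rightarrow> real \<Rightarrow> real" where
  "lp_cost p Y t = (\<Sum>i\<in>UNIV. \<bar>Y i - t\<bar> powr p)"

definition lp_minimiser :: "real \<Rightarrow> ('i::finite \<Rightarrow> real) \<Rightarrow> real \<Rightarrow> bool" where
  "lp_minimiser p Y t \<longleftrightarrow> (\<forall>s. lp_cost p Y t \<le> lp_cost p Y s)"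

lemma has_real_derivative_lp_cost:
  assumes "1 < p"
  shows "(lp_cost p Y has_real_derivative (\<Sum>i\<in>UNIV. p * signed_powr (Y i - t) (p - 1) * - 1)) (at t)"
  unfolding lp_cost_def
proof (rule DERIV_sum)
  fix i
  show "((\<lambda>t. \<bar>Y i - t\<bar> powr p) has_real_derivative p * signed_powr (Y i - t) (p - 1) * - 1) (at t)"
    using DERIV_chain2[OF has_real_derivative_abs_powr[OF assms] DERIV_diff[OF DERIV_const DERIV_ident]]
    by simp
qed

lemma lp_minimiser_root:
  assumes p: "1 < p" and "lp_minimiser p Y t"
  shows "(\<Sum>i\<in>UNIV. signed_powr (Y i - t) (p - 1)) = 0"
proof -
  have "(\<Sum>i\<in>UNIV. p * signed_powr (Y i - t) (p - 1) * - 1) = 0"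
    using DERIV_local_min[OF has_real_derivative_lp_cost[OF p], of 1] assms(2)
    by (auto simp: lp_minimiser_def)
  then have "- p * (\<Sum>i\<in>UNIV. signed_powr (Y i - t) (p - 1)) = 0"
    by (simp add: sum_distrib_left algebra_simps sum_negf)
  then show ?thesis using p by simp
qed

lemma lp_minimiser_exists:
  assumes p: "1 < p" and Y: "\<And>i. Y i \<in> {lo..hi}"
  shows "\<exists>t\<in>{lo..hi}. lp_minimiser p Y t"
proof -
  have "{lo..hi} \<noteq> {}" using Y by blast
  moreover have "continuous_on {lo..hi} (lp_cost p Y)"
    by (intro continuous_at_imp_continuous_on ballI DERIV_isCont[OF has_real_derivative_lp_cost[OF p]])
  ultimately obtain t where t: "t \<in> {lo..hi}" and min: "\<forall>s\<in>{lo..hi}. lp_cost p Y t \<le> lp_cost p Y s"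
    using continuous_attains_inf[OF compact_Icc] by blast
  have "lp_cost p Y t \<le> lp_cost p Y s" for s
  proof -
    define c where "c = max lo (min hi s)"
    have "c \<in> {lo..hi}" using \<open>{lo..hi} \<noteq> {}\<close> by (auto simp: c_def)
    then have "lp_cost p Y t \<le> lp_cost p Y c" using min by blast
    also have "\<dots> \<le> lp_cost p Y s"
      unfolding lp_cost_def
    proof (rule sum_mono)
      fix i
      have "\<bar>Y i - c\<bar> \<le> \<bar>Y i - s\<bar>" using Y[of i] by (auto simp: c_def)
      then show "\<bar>Y i - c\<bar> powr p \<le> \<bar>Y i - s\<bar> powr p" using p by (intro powr_mono2) auto
    qed
    finally show ?thesis .
  qed
  then show ?thesis using t unfolding lp_minimiser_def by blast
qed

lemma lp_minimiser_mono:
  assumes p: "1 < p" and min: "lp_minimiser p Y t" "lp_minimiser p Y' t'" and le: "Y \<le> Y'"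
  shows "t \<le> t'"
proof -
  have "0 < p - 1" using p by simp
  from zero_sum_shift_mono[OF strict_mono_signed_powr[OF this]
      lp_minimiser_root[OF p min(1)] lp_minimiser_root[OF p min(2)] le]
  show ?thesis .
qed

lemma lp_minimiser_strict_mono:
  assumes p: "1 < p" and min: "lp_minimiser p Y t" "lp_minimiser p Y' t'"
    and le: "Y \<le> Y'" and less: "Y k < Y' k"
  shows "t < t'"
proof -
  have "0 < p - 1" using p by simp
  from zero_sum_shift_strict_mono[OF strict_mono_signed_powr[OF this]
      lp_minimiser_root[OF p min(1)] lp_minimiser_root[OF p min(2)] le less]
  show ?thesis .
qed

lemma lp_minimiser_permute:
  assumes "bij \<pi>"
  shows "lp_minimiser p (\<lambda>i. Y (\<pi> i)) t \<longleftrightarrow> lp_minimiser p Y t"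
proof -
  have "lp_cost p (\<lambda>i. Y (\<pi> i)) s = lp_cost p Y s" for s
    using sum.reindex_bij_betw[OF assms, of "\<lambda>i. \<bar>Y i - s\<bar> powr p"] by (simp add: lp_cost_def)
  then show ?thesis by (simp add: lp_minimiser_def)
qed

lemma consistency_if_lp_minimisers:
  assumes p: "1 < p" and s: "\<And>a. lp_minimiser p (\<lambda>i. y i a) (s a)"
  shows "consistency y s"
proof -
  have sb: "lp_minimiser p (\<lambda>i. y (\<pi> i) b) (s b)" if "bij \<pi>" for \<pi> b
    using s lp_minimiser_permute[OF that, of p "\<lambda>i. y i b"] by simp
  have le: "(\<lambda>i. y (\<pi> i) b) \<le> (\<lambda>i. y i a)" if "\<forall>i. y (\<pi> i) b \<le> y i a" for \<pi> a b
    using that by (simp add: le_fun_def)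
  show ?thesis
    unfolding consistency_def efficiency_def dominates_def strictly_dominates_def
    using lp_minimiser_mono[OF p sb s le] lp_minimiser_strict_mono[OF p sb s le] by blast
qed

lemma Lpq_eq_0_iff:
  assumes "0 < p" "0 < q"
  shows "Lpq p q u v = 0 \<longleftrightarrow> u = v"
proof
  assume "Lpq p q u v = 0"
  then have "(\<Sum>i\<in>UNIV. (\<Sum>a\<in>UNIV. \<bar>u i a - v i a\<bar> powr p) powr (q / p)) = 0"
    using assms by (simp add: Lpq_def)
  then have "(\<Sum>a\<in>UNIV. \<bar>u i a - v i a\<bar> powr p) powr (q / p) = 0" for i
    by (subst (asm) sum_nonneg_eq_0_iff) auto
  then have "\<bar>u i a - v i a\<bar> powr p = 0" for i a
    by (simp add: sum_nonneg_eq_0_iff)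
  then show "u = v" by (simp add: fun_eq_iff)
qed (simp add: Lpq_def)

lemma Lpq_less_if_closer:
  assumes p: "0 < p" and q: "0 < q"
    and le: "\<And>i a. \<bar>u i a - v' i a\<bar> \<le> \<bar>u i a - v i a\<bar>"
    and less: "\<bar>u j b - v' j b\<bar> < \<bar>u j b - v j b\<bar>"
  shows "Lpq p q u v' < Lpq p q u v"
proof -
  have inner_le: "(\<Sum>a\<in>UNIV. \<bar>u i a - v' i a\<bar> powr p) \<le> (\<Sum>a\<in>UNIV. \<bar>u i a - v i a\<bar> powr p)" for i
    using le p by (intro sum_mono powr_mono2) auto
  have inner_less: "(\<Sum>a\<in>UNIV. \<bar>u j a - v' j a\<bar> powr p) < (\<Sum>a\<in>UNIV. \<bar>u j a - v j a\<bar> powr p)"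
    using le p less by (intro sum_strict_mono_ex1) (auto intro!: powr_mono2 powr_less_mono2)
  have "(\<Sum>i\<in>UNIV. (\<Sum>a\<in>UNIV. \<bar>u i a - v' i a\<bar> powr p) powr (q / p))
      < (\<Sum>i\<in>UNIV. (\<Sum>a\<in>UNIV. \<bar>u i a - v i a\<bar> powr p) powr (q / p))"
    using inner_le inner_less p q
    by (intro sum_strict_mono_ex1) (auto intro!: powr_mono2 powr_less_mono2 sum_nonneg)
  then show ?thesis
    unfolding Lpq_def using q by (intro powr_less_mono2) (auto intro!: sum_nonneg)
qed

lemma Lpq_nonneg: "0 \<le> Lpq p q u v"
  by (simp add: Lpq_def)

lemma Lpq_diag_le_iff:
  assumes p: "0 < p"
  shows "Lpq p p u v \<le> Lpq p p u w \<longleftrightarrow>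
    (\<Sum>i\<in>UNIV. \<Sum>a\<in>UNIV. \<bar>u i a - v i a\<bar> powr p) \<le> (\<Sum>i\<in>UNIV. \<Sum>a\<in>UNIV. \<bar>u i a - w i a\<bar> powr p)"
proof -
  have Lpq_diag: "Lpq p p u v = (\<Sum>i\<in>UNIV. \<Sum>a\<in>UNIV. \<bar>u i a - v i a\<bar> powr p) powr (1 / p)" for v
    using p by (simp add: Lpq_def sum_nonneg)
  have "A powr (1 / p) \<le> B powr (1 / p) \<longleftrightarrow> A \<le> B" if "0 \<le> A" "0 \<le> B" for A B :: real
    using that p powr_less_mono2[of "1 / p" B A] powr_mono2[of "1 / p" A B] by (auto simp: not_le[symmetric])
  then show ?thesis unfolding Lpq_diag by (simp add: sum_nonneg)
qed

lemma agg_output_reviewer_constant: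
  fixes z s :: "'p::finite \<Rightarrow> real"
  assumes pq: "0 < p" "0 < q" and agg: "agg_output p q (\<lambda>_::'r::finite. z) s"
  shows "s = z"
proof -
  have "Lpq p q (\<lambda>_::'r. z) (\<lambda>_. s) \<le> Lpq p q (\<lambda>_::'r. z) (\<lambda>_. z)"
    using agg unfolding agg_output_def by blast
  also have "\<dots> = 0"
    using Lpq_eq_0_iff[OF pq] by blast
  finally have "Lpq p q (\<lambda>_::'r. z) (\<lambda>_. s) = 0"
    using Lpq_nonneg antisym by blast
  then show ?thesis using pq by (simp add: Lpq_eq_0_iff fun_eq_iff)
qed

lemma feasible_values_reviewer_constant:
  assumes "objectivity x" "w \<in> feasible_values x"
  shows "w i a = w j a"
proof -
  obtain h where "\<forall>i a. w i a = h (x i a)"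
    using assms(2) by (auto simp: feasible_values_def)
  moreover have "x i a = x j a"
    using assms(1) unfolding objectivity_def by blast
  ultimately show ?thesis by simp
qed

lemma Lpq_method_erm_output:
  assumes "0 < p" "0 < q" "objectivity x" "Lpq_method p q x y s"
  shows "erm_output p q x y (\<lambda>_. s)"
proof -
  obtain yhat where erm: "erm_output p q x y yhat" and agg: "agg_output p q yhat s"
    using assms(4) by (auto simp: Lpq_method_def)
  define z where "z a = yhat undefined a" for a
  have "yhat \<in> feasible_values x"
    using erm by (simp add: erm_output_def)
  then have "yhat i a = z a" for i a
    unfolding z_def by (rule feasible_values_reviewer_constant[OF assms(3)])
  then have yhat: "yhat = (\<lambda>_. z)"
    by (simp add: fun_eq_iff)
  then have "s = z"
    using agg agg_output_reviewer_constant[OF assms(1,2)] by simp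
  with erm yhat show ?thesis by simp
qed

definition clamp_at :: "('a::order \<Rightarrow> real) \<Rightarrow> 'a \<Rightarrow> real \<Rightarrow> 'a \<Rightarrow> real" where
  "clamp_at h v0 c v =
     (if v = v0 then c else if v0 \<le> v then max (h v) c else if v \<le> v0 then min (h v) c else h v)"

lemma monotonic_clamp_at:
  assumes h: "monotonic h" and c: "0 \<le> c" "c \<le> 10"
  shows "monotonic (clamp_at h v0 c)"
  unfolding monotonic_def
proof (intro conjI allI impI)
  fix v :: "'a \<Rightarrow> real"
  assume "in_box v"
  then show "0 \<le> clamp_at h v0 c v" "clamp_at h v0 c v \<le> 10"
    using h c by (auto simp: clamp_at_def monotonic_def)
next
  fix v w :: "'a \<Rightarrow> real"
  assume "in_box v" "in_box w" "v \<le> w"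
  then have "h v \<le> h w" using h by (auto simp: monotonic_def)
  then show "clamp_at h v0 c v \<le> clamp_at h v0 c w"
    using \<open>v \<le> w\<close> unfolding clamp_at_def by (auto dest: order_trans antisym)
qed

lemma clamp_at_closer:
  assumes g: "monotonic g" "g v0 = c" and "in_box v" "in_box v0"
  shows "\<bar>g v - clamp_at h v0 c v\<bar> \<le> \<bar>g v - h v\<bar>"
proof -
  have "v0 \<le> v \<Longrightarrow> c \<le> g v" "v \<le> v0 \<Longrightarrow> g v \<le> c"
    using g assms(3,4) by (auto simp: monotonic_def)
  then show ?thesis using g(2) by (auto simp: clamp_at_def)
qed

lemma erm_output_consensus:
  assumes "0 < p" "0 < q" "admissible x y" "objectivity x" and erm: "erm_output p q x y yhat"
    and cons: "\<forall>j. y j a = c"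
  shows "yhat i a = c"
proof (rule ccontr)
  assume ne: "yhat i a \<noteq> c"
  obtain g where g: "\<And>i. monotonic (g i)" "\<And>i a. y i a = g i (x i a)"
    using assms(3) unfolding admissible_def by metis
  obtain h where h: "monotonic h" "\<And>i a. yhat i a = h (x i a)"
    using erm by (auto simp: erm_output_def feasible_values_def)
  define v0 where "v0 = x i a"
  have box: "in_box (x j b)" for j b
    using assms(3) by (simp add: admissible_def)
  have "x j a = v0" for j
    using assms(4) unfolding objectivity_def v0_def by blast
  then have gv0: "g j v0 = c" for j
    using cons g(2)[of j a] by simp
  have "in_box v0"
    using box by (simp add: v0_def)
  then have closer: "\<bar>y j b - clamp_at h v0 c (x j b)\<bar> \<le> \<bar>y j b - yhat j b\<bar>" for j b
    using clamp_at_closer[OF g(1) gv0 box] by (simp add: g(2) h(2))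
  have "0 \<le> c" "c \<le> 10" using assms(3) cons by (auto simp: admissible_def)
  then have "(\<lambda>i a. clamp_at h v0 c (x i a)) \<in> feasible_values x"
    using monotonic_clamp_at[OF h(1)] by (auto simp: feasible_values_def)
  moreover have "Lpq p q y (\<lambda>i a. clamp_at h v0 c (x i a)) < Lpq p q y yhat"
    using Lpq_less_if_closer[OF assms(1,2) closer, where j = i and b = a] ne cons
    by (simp add: clamp_at_def v0_def)
  ultimately show False using erm by (force simp: erm_output_def)
qed

lemma exists_monotonic_lp_minimiser:
  fixes g :: "'i::finite \<Rightarrow> ('c \<Rightarrow> real) \<Rightarrow> real"
  assumes p: "1 < p" and g: "\<And>i. monotonic (g i)"
  shows "\<exists>M. monotonic M \<and> (\<forall>v. in_box v \<longrightarrow> lp_minimiser p (\<lambda>i. g i v) (M v))"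
proof -
  define M where "M v = (SOME t. t \<in> {0..10} \<and> lp_minimiser p (\<lambda>i. g i v) t)" for v
  have M: "M v \<in> {0..10} \<and> lp_minimiser p (\<lambda>i. g i v) (M v)" if "in_box v" for v
  proof -
    have "\<exists>t\<in>{0..10}. lp_minimiser p (\<lambda>i. g i v) t"
      using g that by (intro lp_minimiser_exists[OF p]) (auto simp: monotonic_def)
    then have "\<exists>t. t \<in> {0..10} \<and> lp_minimiser p (\<lambda>i. g i v) t" by blast
    then show ?thesis unfolding M_def by (rule someI_ex)
  qed
  have "monotonic M"
    unfolding monotonic_def
  proof (intro conjI allI impI)
    fix v :: "'c \<Rightarrow> real"
    assume "in_box v"
    then show "0 \<le> M v" "M v \<le> 10" using M by auto
  next
    fix v w :: "'c \<Rightarrow> real"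
    assume "in_box v" "in_box w" "v \<le> w"
    then have "(\<lambda>i. g i v) \<le> (\<lambda>i. g i w)" using g by (auto simp: monotonic_def le_fun_def)
    with M \<open>in_box v\<close> \<open>in_box w\<close> show "M v \<le> M w"
      by (intro lp_minimiser_mono[OF p]) auto
  qed
  then show ?thesis using M by blast
qed

lemma erm_output_lp_minimiser:
  assumes p: "1 < p" and "admissible x y" "objectivity x" and erm: "erm_output p p x y (\<lambda>_. s)"
  shows "lp_minimiser p (\<lambda>i. y i a) (s a)"
proof -
  obtain g where g: "\<And>i. monotonic (g i)" "\<And>i a. y i a = g i (x i a)"
    using assms(2) unfolding admissible_def by metis
  obtain M where M: "monotonic M" "\<And>v. in_box v \<Longrightarrow> lp_minimiser p (\<lambda>i. g i v) (M v)"
    using exists_monotonic_lp_minimiser[OF p, where g = g] g(1) by blast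
  define X where "X a = x undefined a" for a
  have x: "x i a = X a" for i a
    using assms(3) unfolding objectivity_def X_def by blast
  have Mmin: "lp_minimiser p (\<lambda>i. y i b) (M (X b))" for b
    using M(2)[of "X b"] assms(2) by (simp add: g(2) x admissible_def)
  let ?cost = "\<lambda>t b. lp_cost p (\<lambda>i. y i b) (t b)"
  have "(\<lambda>i a. M (x i a)) \<in> feasible_values x"
    using M(1) by (auto simp: feasible_values_def)
  then have "Lpq p p y (\<lambda>_. s) \<le> Lpq p p y (\<lambda>i a. M (x i a))"
    using erm by (simp add: erm_output_def)
  moreover have "0 < p" using p by simp
  ultimately have "(\<Sum>b\<in>UNIV. ?cost s b) \<le> (\<Sum>b\<in>UNIV. ?cost (\<lambda>b. M (X b)) b)"
    unfolding lp_cost_def x by (subst (1 2) sum.swap) (simp add: Lpq_diag_le_iff)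
  moreover have le: "?cost (\<lambda>b. M (X b)) b \<le> ?cost s b" for b
    using Mmin by (simp add: lp_minimiser_def)
  ultimately have "(\<Sum>b\<in>UNIV. ?cost (\<lambda>b. M (X b)) b) = (\<Sum>b\<in>UNIV. ?cost s b)"
    using sum_mono[OF le] by (intro antisym)
  then have "?cost (\<lambda>b. M (X b)) a = ?cost s a"
    by (rule sum_mono_inv) (use le in auto)
  then show ?thesis
    using Mmin[of a] by (simp add: lp_minimiser_def)
qed

theorem theorem3p1:
  fixes p q :: real
    and x :: "'r::finite \<Rightarrow> 'p::finite \<Rightarrow> 'c::finite \<Rightarrow> real"
    and y :: "'r \<Rightarrow> 'p \<Rightarrow> real"
    and s :: "'p \<Rightarrow> real"
  assumes "1 < p" and "1 < q"
    and "admissible x y"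
    and "objectivity x"
    and "Lpq_method p q x y s"
  shows "consensus y s \<and> (p = q \<longrightarrow> consistency y s)"
proof -
  have pos: "0 < p" "0 < q" using assms(1,2) by auto
  have erm: "erm_output p q x y (\<lambda>_. s)"
    using Lpq_method_erm_output[OF pos assms(4,5)] .
  have "consensus y s"
    unfolding consensus_def using erm_output_consensus[OF pos assms(3,4) erm] by blast
  moreover have "consistency y s" if "p = q"
    using erm_output_lp_minimiser[OF assms(1,3,4)] erm that
    by (intro consistency_if_lp_minimisers[OF assms(1)]) simp
  ultimately show ?thesis by blast
qed

end
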